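(* Let $\mathbb{B}=ro(Add(\omega,1))$ (in $V$). Let $\dot{x}\in V^{\mathbb{B}}$ be such that $\Vdash\dot{x}\subseteq\check{V}\wedge\dot{x}\notin\check{V}$ and every element of $\dot{x}$ is of the form $\langle\check{n},c\rangle$ with $n\in V$ and $c\in\mathbb{B}$. Then for all $b\in\mathbb{B}$ there is some $\mathcal{A}\subseteq Aut(\mathbb{B})^{V}$ with $|\mathcal{A}|>\omega$ such that for all $\sigma\neq\tau$ in $\mathcal{A}$, $\sigma(b)=b=\tau(b)$ and $b\Vdash\sigma\dot{x}\neq\tau\dot{x}$.
   Context: $\mathbb{B}$ is the complete Boolean algebra of regular open subsets of Cohen forcing $Add(\omega,1)$. For $\sigma\in Aut(\mathbb{B})$ and a $\mathbb{B}$-name $\dot x$, $\sigma\dot x$ is the name obtained by applying $\sigma$ recursively. *)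

theory Defs
  imports "HOL-Library.Countable_Set"
begin

text \<open>Conditions: finite partial functions from nat to bool.
  q extends p (q is stronger, q \<le> p) iff p \<subseteq>m q.\<close>

definition Cond :: "(nat \<rightharpoonup> bool) set" where
  "Cond = {p. finite (dom p)}"

definition cext :: "(nat \<rightharpoonup> bool) \<Rightarrow> (nat \<rightharpoonup> bool) \<Rightarrow> bool" where
  "cext q p \<longleftrightarrow> p \<subseteq>\<^sub>m q"

text \<open>Regular open subsets (= regular open cuts) of the Cohen poset.\<close>
definition RO :: "(nat \<rightharpoonup> bool) set set" where
  "RO = {U. U \<subseteq> Cond
          \<and> (\<forall>p\<in>U. \<forall>q\<in>Cond. cext q p \<longrightarrow> q \<in> U)
          \<and> (\<forall>p\<in>Cond. (\<forall>q\<in>Cond. cext q p \<longrightarrow> (\<exists>r\<in>Cond. cext r q \<and> r \<in> U)) \<longrightarrow> p \<in> U)}"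

definition btop :: "(nat \<rightharpoonup> bool) set" where "btop = Cond"

definition bneg :: "(nat \<rightharpoonup> bool) set \<Rightarrow> (nat \<rightharpoonup> bool) set" where
  "bneg U = {p\<in>Cond. \<forall>q\<in>Cond. cext q p \<longrightarrow> q \<notin> U}"

text \<open>Supremum in ro(P): regularization of the union.\<close>
definition bsup :: "(nat \<rightharpoonup> bool) set set \<Rightarrow> (nat \<rightharpoonup> bool) set" where
  "bsup S = {p\<in>Cond. \<forall>q\<in>Cond. cext q p \<longrightarrow> (\<exists>r\<in>Cond. cext r q \<and> r \<in> \<Union>S)}"

text \<open>Infimum in ro(P): intersection (the empty infimum is the top).\<close>
definition binf :: "(nat \<rightharpoonup> bool) set set \<Rightarrow> (nat \<rightharpoonup> bool) set" where
  "binf S = Cond \<inter> \<Inter>S"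

definition bimp :: "(nat \<rightharpoonup> bool) set \<Rightarrow> (nat \<rightharpoonup> bool) set \<Rightarrow> (nat \<rightharpoonup> bool) set" where
  "bimp a c = bsup {bneg a, c}"

text \<open>Such a name is represented by its set of pairs (n, c), n a ground object of type 'a,
  c \<in> B.  The check name of a ground set y is {(m-check, 1) | m \<in> y}.\<close>

definition check :: "'a set \<Rightarrow> ('a \<times> (nat \<rightharpoonup> bool) set) set" where
  "check y = {(m, btop) | m. m \<in> y}"

text \<open>[[n-check \<in> Y]] = sup over (m-check,d) \<in> Y of d \<and> [[n-check = m-check]],
  where [[n-check = m-check]] is 1 if n = m and 0 otherwise.\<close>
definition mem_val :: "'a \<Rightarrow> ('a \<times> (nat \<rightharpoonup> bool) set) set \<Rightarrow> (nat \<rightharpoonup> bool) set" where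
  "mem_val n Y = bsup {d. (n, d) \<in> Y}"

definition bsubset :: "('a \<times> (nat \<rightharpoonup> bool) set) set \<Rightarrow> ('a \<times> (nat \<rightharpoonup> bool) set) set
                         \<Rightarrow> (nat \<rightharpoonup> bool) set" where
  "bsubset X Y = binf {bimp c (mem_val n Y) | n c. (n, c) \<in> X}"

definition beq :: "('a \<times> (nat \<rightharpoonup> bool) set) set \<Rightarrow> ('a \<times> (nat \<rightharpoonup> bool) set) set
                     \<Rightarrow> (nat \<rightharpoonup> bool) set" where
  "beq X Y = bsubset X Y \<inter> bsubset Y X"

text \<open>Boolean algebra automorphisms of ro(P); outside RO the function is the identity,
  so that equality of automorphisms is equality of functions.\<close>
definition Aut :: "((nat \<rightharpoonup> bool) set \<Rightarrow> (nat \<rightharpoonup> bool) set) set" where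
  "Aut = {\<sigma>. bij_betw \<sigma> RO RO
             \<and> (\<forall>U\<in>RO. \<forall>V\<in>RO. \<sigma> (U \<inter> V) = \<sigma> U \<inter> \<sigma> V)
             \<and> (\<forall>U\<in>RO. \<sigma> (bneg U) = bneg (\<sigma> U))
             \<and> (\<forall>U. U \<notin> RO \<longrightarrow> \<sigma> U = U)}"

text \<open>Recursive application: sigma <n-check, c> = <sigma n-check, sigma c> = <n-check, sigma c>,
  since sigma fixes check names (sigma 1 = 1).\<close>
definition name_app :: "((nat \<rightharpoonup> bool) set \<Rightarrow> (nat \<rightharpoonup> bool) set)
                         \<Rightarrow> ('a \<times> (nat \<rightharpoonup> bool) set) set \<Rightarrow> ('a \<times> (nat \<rightharpoonup> bool) set) set" where
  "name_app \<sigma> X = {(n, \<sigma> c) | n c. (n, c) \<in> X}"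

end

theory Submission
  imports Defs "HOL-Library.Sublist"
begin

text \<open>
  Finite binary strings l, read as the conditions node l, are dense in Cohen forcing, so a
  regular open set is determined by the nodes it contains.  Every a :: bool list \<Rightarrow> bool
  yields a tree automorphism, flipping the bit after u exactly when a u holds, and hence an
  automorphism of ro(P).  Automorphisms preserve suprema, so
  \<sigma> [[n \<in> X]] = [[n \<in> \<sigma> X]] for names X as in the statement.

  As X is not forced to be a ground set, no condition decides all statements n \<in> X; hence
  above any two nodes there are extensions of every large common length that decide some
  n \<in> X in opposite ways.  For each f :: nat \<Rightarrow> bool a flip function a_f supported
  in b is built in stages: at stage j, above the node enumerated at j and for every pair
  s \<noteq> s' of candidates for f|j and g|j, a fresh block of flips steers the images of one
  node under a_f and a_g onto such an opposite pair.  So for f \<noteq> g every node of b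
  has an extension at which the induced automorphisms \<sigma>_f and \<sigma>_g separate some
  n \<in> X.  Hence b forces \<sigma>_f X \<noteq> \<sigma>_g X, and f \<mapsto> \<sigma>_f is injective
  on the uncountable set of all f.
\<close>

section \<open>Nodes and regular open sets of Cohen forcing\<close>

definition node :: "bool list \<Rightarrow> (nat \<rightharpoonup> bool)" where
  "node l = (\<lambda>i. if i < length l then Some (l ! i) else None)"

definition extension_closed :: "(nat \<rightharpoonup> bool) set \<Rightarrow> bool" where
  "extension_closed U \<longleftrightarrow> (\<forall>p\<in>U. \<forall>q\<in>Cond. cext q p \<longrightarrow> q \<in> U)"

lemma dom_node: "dom (node l) = {..<length l}"
  by (auto simp: node_def dom_def)

lemma node_in_Cond [simp]: "node l \<in> Cond"
  by (simp add: Cond_def dom_node)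

lemma cext_refl [simp]: "cext p p"
  by (simp add: cext_def)

lemma cext_trans: "cext r q \<Longrightarrow> cext q p \<Longrightarrow> cext r p"
  unfolding cext_def using map_le_trans by blast

lemma cext_node_Nil: "cext p (node [])"
  by (simp add: cext_def map_le_def dom_node)

lemma prefix_iff_take: "prefix l m \<longleftrightarrow> take (length l) m = l"
  by (metis append_eq_conv_conj prefix_def take_is_prefix)

lemma prefix_append_map_nth:
  "prefix Y z \<Longrightarrow> length z = length Y + L \<Longrightarrow> Y @ map (\<lambda>k. z ! (length Y + k)) [0..<L] = z"
  by (auto elim!: prefixE intro!: nth_equalityI simp: nth_append)

lemma cext_node_iff_prefix: "cext (node m) (node l) \<longleftrightarrow> prefix l m"
proof -
  have "cext (node m) (node l) \<longleftrightarrow> (\<forall>i<length l. i < length m \<and> m ! i = l ! i)"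
    unfolding cext_def map_le_def dom_node by (auto simp: node_def split: if_splits)
  also have "\<dots> \<longleftrightarrow> take (length l) m = l"
    by (auto simp: list_eq_iff_nth_eq min_def) (metis le_neq_implies_less less_irrefl)
  finally show ?thesis by (simp add: prefix_iff_take)
qed

lemma eventually_nodes_below:
  assumes p: "p \<in> Cond" and Y: "cext p (node Y)"
  shows "\<forall>\<^sub>F N in sequentially. \<exists>l. length l = N \<and> prefix Y l \<and> cext (node l) p"
proof -
  obtain B where B: "dom p \<subseteq> {..<B}"
    using p finite_nat_iff_bounded by (auto simp: Cond_def)
  have "\<exists>l. length l = N \<and> prefix Y l \<and> cext (node l) p" if "B \<le> N" for N
  proof -
    define l where "l = map (\<lambda>i. p i = Some True) [0..<N]"
    have "cext (node l) p"
      using B \<open>B \<le> N\<close> unfolding cext_def map_le_def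
      by (auto simp: node_def l_def subset_iff)
    moreover have "prefix Y l"
      using cext_trans[OF \<open>cext (node l) p\<close> Y] by (simp add: cext_node_iff_prefix)
    ultimately show ?thesis by (intro exI[of _ l]) (simp add: l_def)
  qed
  then show ?thesis by (auto simp: eventually_sequentially)
qed

lemma exists_node_below:
  assumes "p \<in> Cond" and "cext p (node Y)"
  shows "\<exists>l. prefix Y l \<and> cext (node l) p"
  using eventually_happens'[OF sequentially_bot eventually_nodes_below[OF assms]] by blast

lemma extension_closedD: "extension_closed U \<Longrightarrow> p \<in> U \<Longrightarrow> q \<in> Cond \<Longrightarrow> cext q p \<Longrightarrow> q \<in> U"
  by (auto simp: extension_closed_def)

lemma extension_closed_prefix:
  "extension_closed U \<Longrightarrow> node l \<in> U \<Longrightarrow> prefix l m \<Longrightarrow> node m \<in> U"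
  by (simp add: extension_closedD cext_node_iff_prefix)

lemma RO_extension_closed: "U \<in> RO \<Longrightarrow> extension_closed U"
  unfolding RO_def extension_closed_def by blast

lemma RO_subset_Cond: "U \<in> RO \<Longrightarrow> U \<subseteq> Cond"
  unfolding RO_def by blast

lemma RO_memI:
  "U \<in> RO \<Longrightarrow> p \<in> Cond \<Longrightarrow> (\<forall>q\<in>Cond. cext q p \<longrightarrow> (\<exists>r\<in>Cond. cext r q \<and> r \<in> U)) \<Longrightarrow> p \<in> U"
  unfolding RO_def by blast

lemma RO_mem_iff_nodes:
  assumes U: "U \<in> RO" and p: "p \<in> Cond"
  shows "p \<in> U \<longleftrightarrow> (\<forall>l. cext (node l) p \<longrightarrow> node l \<in> U)"
proof
  assume "\<forall>l. cext (node l) p \<longrightarrow> node l \<in> U"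
  then show "p \<in> U"
    using RO_memI[OF U p] exists_node_below[OF _ cext_node_Nil] cext_trans node_in_Cond by meson
qed (use extension_closedD[OF RO_extension_closed[OF U]] node_in_Cond in blast)

lemma RO_eqI_nodes:
  assumes "U \<in> RO" "V \<in> RO" "\<And>l. node l \<in> U \<longleftrightarrow> node l \<in> V"
  shows "U = V"
  using RO_mem_iff_nodes[OF assms(1)] RO_mem_iff_nodes[OF assms(2)] assms RO_subset_Cond by blast

lemma RO_nonempty_node:
  assumes U: "U \<in> RO" and "U \<noteq> {}"
  shows "\<exists>q. node q \<in> U"
proof -
  obtain p where p: "p \<in> U" using \<open>U \<noteq> {}\<close> by blast
  then obtain q where "cext (node q) p"
    using exists_node_below[OF _ cext_node_Nil] RO_subset_Cond[OF U] by blast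
  then show ?thesis using extension_closedD[OF RO_extension_closed[OF U] p node_in_Cond] by blast
qed

lemma Cond_RO: "Cond \<in> RO"
  unfolding RO_def by blast

lemma empty_RO: "{} \<in> RO"
  unfolding RO_def using cext_refl by blast

lemma RO_Int:
  assumes U: "U \<in> RO" and V: "V \<in> RO"
  shows "U \<inter> V \<in> RO"
  unfolding RO_def
proof (intro CollectI conjI ballI impI)
  show "U \<inter> V \<subseteq> Cond" using U RO_subset_Cond by blast
  show "q \<in> U \<inter> V" if "p \<in> U \<inter> V" "q \<in> Cond" "cext q p" for p q
    using that extension_closedD RO_extension_closed U V by blast
  show "p \<in> U \<inter> V"
    if "p \<in> Cond" and "\<forall>q\<in>Cond. cext q p \<longrightarrow> (\<exists>r\<in>Cond. cext r q \<and> r \<in> U \<inter> V)" for p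
    using that RO_memI[OF U] RO_memI[OF V] by (metis IntD1 IntD2 IntI)
qed

lemma bsup_RO: "bsup S \<in> RO"
  unfolding RO_def
proof (intro CollectI conjI ballI impI)
  show "bsup S \<subseteq> Cond" by (auto simp: bsup_def)
  show "q \<in> bsup S" if "p \<in> bsup S" "q \<in> Cond" "cext q p" for p q
    using that cext_trans unfolding bsup_def by blast
  show "p \<in> bsup S"
    if p: "p \<in> Cond" and dense: "\<forall>q\<in>Cond. cext q p \<longrightarrow> (\<exists>r\<in>Cond. cext r q \<and> r \<in> bsup S)" for p
    unfolding bsup_def
  proof (intro CollectI conjI p ballI impI)
    fix q assume "q \<in> Cond" "cext q p"
    then obtain r where r: "cext r q" "r \<in> bsup S" using dense by blast
    then obtain r' where "r' \<in> Cond" "cext r' r" "r' \<in> \<Union>S"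
      using cext_refl unfolding bsup_def by blast
    then show "\<exists>r\<in>Cond. cext r q \<and> r \<in> \<Union>S" using r(1) cext_trans by blast
  qed
qed

lemma bsup_memI:
  assumes "p \<in> Cond" "p \<in> U" "U \<in> S" "extension_closed U"
  shows "p \<in> bsup S"
  unfolding bsup_def
proof (intro CollectI conjI assms(1) ballI impI)
  fix q assume "q \<in> Cond" "cext q p"
  then show "\<exists>r\<in>Cond. cext r q \<and> r \<in> \<Union>S"
    using extension_closedD[OF assms(4,2)] assms(3) cext_refl by blast
qed

lemma bsup_upper: "U \<in> RO \<Longrightarrow> U \<in> S \<Longrightarrow> U \<subseteq> bsup S"
  using bsup_memI RO_extension_closed RO_subset_Cond by blast

lemma bsup_least: "W \<in> RO \<Longrightarrow> \<forall>U\<in>S. U \<subseteq> W \<Longrightarrow> bsup S \<subseteq> W"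
  unfolding bsup_def by (blast intro: RO_memI)

lemma bsup_empty: "bsup {} = {}"
  unfolding bsup_def using cext_refl by blast

lemma bsup_Cond: "bsup {Cond} = Cond"
  using bsup_upper[OF Cond_RO] bsup_RO RO_subset_Cond by blast

lemma Int_bsup_subset:
  assumes W: "extension_closed W" and V: "V \<in> RO"
    and S: "\<And>U. U \<in> S \<Longrightarrow> W \<inter> U \<subseteq> V"
  shows "W \<inter> bsup S \<subseteq> V"
proof
  fix p assume p: "p \<in> W \<inter> bsup S"
  show "p \<in> V"
  proof (rule RO_memI[OF V])
    show "p \<in> Cond" using p by (simp add: bsup_def)
    show "\<forall>q\<in>Cond. cext q p \<longrightarrow> (\<exists>r\<in>Cond. cext r q \<and> r \<in> V)"
      using p S extension_closedD[OF W] cext_trans unfolding bsup_def by blast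
  qed
qed

lemma bneg_extension_closed: "extension_closed (bneg U)"
  unfolding extension_closed_def bneg_def using cext_trans by blast

lemma bneg_disjoint: "p \<in> bneg U \<Longrightarrow> p \<notin> U"
  by (auto simp: bneg_def)

lemma bneg_RO:
  assumes U: "extension_closed U"
  shows "bneg U \<in> RO"
  unfolding RO_def
proof (intro CollectI conjI ballI impI)
  show "bneg U \<subseteq> Cond" by (auto simp: bneg_def)
  show "q \<in> bneg U" if "p \<in> bneg U" "q \<in> Cond" "cext q p" for p q
    using that bneg_extension_closed extension_closedD by blast
  show "p \<in> bneg U"
    if p: "p \<in> Cond" and dense: "\<forall>q\<in>Cond. cext q p \<longrightarrow> (\<exists>r\<in>Cond. cext r q \<and> r \<in> bneg U)" for p
    unfolding bneg_def
  proof (intro CollectI conjI p ballI impI notI)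
    fix q assume "q \<in> Cond" "cext q p" "q \<in> U"
    then obtain r where "r \<in> Cond" "cext r q" "r \<in> bneg U" using dense by blast
    then show False using extension_closedD[OF U \<open>q \<in> U\<close>] bneg_disjoint by blast
  qed
qed

lemma bneg_antimono: "U \<subseteq> V \<Longrightarrow> bneg V \<subseteq> bneg U"
  by (auto simp: bneg_def)

lemma node_in_bneg_iff:
  assumes "extension_closed W"
  shows "node l \<in> bneg W \<longleftrightarrow> (\<forall>m. prefix l m \<longrightarrow> node m \<notin> W)"
proof
  show "\<forall>m. prefix l m \<longrightarrow> node m \<notin> W" if "node l \<in> bneg W"
    using that unfolding bneg_def by (auto simp: cext_node_iff_prefix)
  show "node l \<in> bneg W" if none: "\<forall>m. prefix l m \<longrightarrow> node m \<notin> W"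
    unfolding bneg_def
  proof (intro CollectI conjI node_in_Cond ballI impI notI)
    fix q assume "q \<in> Cond" "cext q (node l)" "q \<in> W"
    then obtain m where "prefix l m" "cext (node m) q" using exists_node_below by blast
    then show False using none extension_closedD[OF assms \<open>q \<in> W\<close>] by auto
  qed
qed

lemma subset_bneg_by_nodes:
  assumes b: "b \<in> RO" and W: "extension_closed W"
    and escape: "\<And>q. node q \<in> b \<Longrightarrow> \<exists>r. prefix q r \<and> node r \<notin> W"
  shows "b \<subseteq> bneg W"
proof
  fix p assume p: "p \<in> b"
  have "q \<notin> W" if q: "q \<in> Cond" "cext q p" for q
  proof
    assume "q \<in> W"
    obtain l where l: "cext (node l) q" using exists_node_below[OF q(1) cext_node_Nil] by blast
    have "node l \<in> b"
      using extension_closedD[OF RO_extension_closed[OF b] p node_in_Cond cext_trans[OF l q(2)]] .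
    then obtain r where "prefix l r" "node r \<notin> W" using escape by blast
    moreover have "node l \<in> W" using extension_closedD[OF W \<open>q \<in> W\<close> node_in_Cond l] .
    ultimately show False using extension_closed_prefix[OF W] by blast
  qed
  then show "p \<in> bneg W" using p RO_subset_Cond[OF b] by (auto simp: bneg_def)
qed

lemma bimp_mp: "a \<in> RO \<Longrightarrow> c \<in> RO \<Longrightarrow> a \<inter> bimp a c \<subseteq> c"
  unfolding bimp_def by (rule Int_bsup_subset) (auto dest: bneg_disjoint RO_extension_closed)

lemma extension_closed_binf: "(\<And>U. U \<in> S \<Longrightarrow> extension_closed U) \<Longrightarrow> extension_closed (binf S)"
  unfolding extension_closed_def binf_def by blast

lemma extension_closed_bsubset: "extension_closed (bsubset Y Z)"
  unfolding bsubset_def bimp_def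
  by (rule extension_closed_binf) (auto intro: RO_extension_closed bsup_RO)

lemma bsubset_subset_bimp: "(n, c) \<in> Y \<Longrightarrow> bsubset Y Z \<subseteq> bimp c (mem_val n Z)"
  unfolding bsubset_def binf_def by blast

lemma extension_closed_beq: "extension_closed (beq X Y)"
  using extension_closed_bsubset unfolding beq_def extension_closed_def by blast

section \<open>Automorphisms and names\<close>

lemma Aut_RO: "\<sigma> \<in> Aut \<Longrightarrow> U \<in> RO \<Longrightarrow> \<sigma> U \<in> RO"
  unfolding Aut_def bij_betw_def by auto

lemma Aut_Int: "\<sigma> \<in> Aut \<Longrightarrow> U \<in> RO \<Longrightarrow> V \<in> RO \<Longrightarrow> \<sigma> (U \<inter> V) = \<sigma> U \<inter> \<sigma> V"
  by (simp add: Aut_def)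

lemma Aut_bneg: "\<sigma> \<in> Aut \<Longrightarrow> U \<in> RO \<Longrightarrow> \<sigma> (bneg U) = bneg (\<sigma> U)"
  by (simp add: Aut_def)

lemma Aut_subset_iff:
  assumes \<sigma>: "\<sigma> \<in> Aut" and U: "U \<in> RO" and V: "V \<in> RO"
  shows "\<sigma> U \<subseteq> \<sigma> V \<longleftrightarrow> U \<subseteq> V"
proof -
  have "inj_on \<sigma> RO" using \<sigma> by (simp add: Aut_def bij_betw_def)
  then have "\<sigma> (U \<inter> V) = \<sigma> U \<longleftrightarrow> U \<inter> V = U"
    using RO_Int[OF U V] U by (simp add: inj_on_eq_iff)
  then show ?thesis using Aut_Int[OF \<sigma> U V] by (simp add: le_iff_inf)
qed

lemma Aut_surj: "\<sigma> \<in> Aut \<Longrightarrow> \<sigma> ` RO = RO"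
  unfolding Aut_def by (simp add: bij_betw_def)

lemma Aut_empty:
  assumes \<sigma>: "\<sigma> \<in> Aut"
  shows "\<sigma> {} = {}"
proof -
  obtain U where "U \<in> RO" "\<sigma> U = {}"
    using \<sigma> empty_RO Aut_surj by (metis imageE)
  then show ?thesis using Aut_Int[OF \<sigma> empty_RO \<open>U \<in> RO\<close>] by simp
qed

lemma Aut_bsup:
  assumes \<sigma>: "\<sigma> \<in> Aut" and S: "S \<subseteq> RO"
  shows "\<sigma> (bsup S) = bsup (\<sigma> ` S)"
proof (rule antisym)
  obtain V where V: "V \<in> RO" "\<sigma> V = bsup (\<sigma> ` S)"
    using \<sigma> bsup_RO Aut_surj by (metis imageE)
  have "U \<subseteq> V" if "U \<in> S" for U
  proof -
    have "\<sigma> U \<subseteq> \<sigma> V"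
      unfolding V(2) using that S by (intro bsup_upper Aut_RO[OF \<sigma>]) auto
    then show ?thesis using Aut_subset_iff[OF \<sigma> _ V(1)] that S by blast
  qed
  then have "bsup S \<subseteq> V" using bsup_least[OF V(1)] by blast
  then show "\<sigma> (bsup S) \<subseteq> bsup (\<sigma> ` S)"
    using Aut_subset_iff[OF \<sigma> bsup_RO V(1)] V(2) by blast
  show "bsup (\<sigma> ` S) \<subseteq> \<sigma> (bsup S)"
  proof (rule bsup_least[OF Aut_RO[OF \<sigma> bsup_RO]], intro ballI)
    fix W assume "W \<in> \<sigma> ` S"
    then obtain U where "U \<in> S" "W = \<sigma> U" by blast
    then show "W \<subseteq> \<sigma> (bsup S)"
      using Aut_subset_iff[OF \<sigma> _ bsup_RO] bsup_upper S by blast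
  qed
qed

lemma mem_val_RO: "mem_val n X \<in> RO"
  unfolding mem_val_def by (rule bsup_RO)

lemma mem_val_upper: "(n, c) \<in> X \<Longrightarrow> c \<in> RO \<Longrightarrow> c \<subseteq> mem_val n X"
  unfolding mem_val_def by (rule bsup_upper) auto

lemma mem_val_check: "mem_val n (check y) = (if n \<in> y then Cond else {})"
  by (simp add: mem_val_def check_def btop_def bsup_Cond bsup_empty)

lemma name_app_RO:
  "\<sigma> \<in> Aut \<Longrightarrow> \<forall>(n, c)\<in>X. c \<in> RO \<Longrightarrow> \<forall>(n, c)\<in>name_app \<sigma> X. c \<in> RO"
  unfolding name_app_def using Aut_RO by fastforce

lemma mem_val_name_app:
  assumes "\<sigma> \<in> Aut" and "\<forall>(n, c)\<in>X. c \<in> RO"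
  shows "mem_val n (name_app \<sigma> X) = \<sigma> (mem_val n X)"
proof -
  have "{d. (n, d) \<in> name_app \<sigma> X} = \<sigma> ` {c. (n, c) \<in> X}"
    by (auto simp: name_app_def)
  moreover have "{c. (n, c) \<in> X} \<subseteq> RO" using assms(2) by auto
  ultimately show ?thesis
    unfolding mem_val_def using Aut_bsup[OF assms(1)] by simp
qed

lemma mem_val_bsubset:
  assumes "\<forall>(n, c)\<in>Y. c \<in> RO"
  shows "bsubset Y Z \<inter> mem_val n Y \<subseteq> mem_val n Z"
proof -
  have "bsubset Y Z \<inter> c \<subseteq> mem_val n Z" if "(n, c) \<in> Y" for c
  proof -
    have "c \<in> RO" using assms that by blast
    then have "c \<inter> bimp c (mem_val n Z) \<subseteq> mem_val n Z" by (rule bimp_mp[OF _ mem_val_RO])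
    then show ?thesis using bsubset_subset_bimp[OF that] by blast
  qed
  then show ?thesis
    unfolding mem_val_def[of n Y]
    by (intro Int_bsup_subset[OF extension_closed_bsubset mem_val_RO]) auto
qed

lemma Aut_opposite_not_in_beq:
  assumes \<sigma>: "\<sigma> \<in> Aut" and \<tau>: "\<tau> \<in> Aut" and X: "\<forall>(n, c)\<in>X. c \<in> RO"
    and p: "p \<in> \<sigma> (mem_val n X)" "p \<in> \<tau> (bneg (mem_val n X))"
  shows "p \<notin> beq (name_app \<sigma> X) (name_app \<tau> X)"
proof
  assume "p \<in> beq (name_app \<sigma> X) (name_app \<tau> X)"
  then have "p \<in> bsubset (name_app \<sigma> X) (name_app \<tau> X)" by (simp add: beq_def)
  moreover have "p \<in> mem_val n (name_app \<sigma> X)"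
    using p(1) mem_val_name_app[OF \<sigma> X] by simp
  ultimately have "p \<in> \<tau> (mem_val n X)"
    using mem_val_bsubset[OF name_app_RO[OF \<sigma> X]] mem_val_name_app[OF \<tau> X] by blast
  moreover have "p \<in> bneg (\<tau> (mem_val n X))"
    using p(2) Aut_bneg[OF \<tau> mem_val_RO[of n X]] by simp
  ultimately show False using bneg_disjoint by blast
qed

lemma Aut_opposite_neq:
  assumes \<sigma>: "\<sigma> \<in> Aut" and "p \<in> \<sigma> U" "p \<in> \<tau> (bneg U)" "U \<in> RO"
  shows "\<sigma> \<noteq> \<tau>"
  using assms Aut_bneg[OF \<sigma>] bneg_disjoint by metis

section \<open>Automorphisms induced by flipping the binary tree\<close>

definition tree_flip :: "(bool list \<Rightarrow> bool) \<Rightarrow> bool list \<Rightarrow> bool list" where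
  "tree_flip a l = map (\<lambda>i. l ! i \<noteq> a (take i l)) [0..<length l]"

definition tree_unflip :: "(bool list \<Rightarrow> bool) \<Rightarrow> bool list \<Rightarrow> bool list" where
  "tree_unflip a l = foldl (\<lambda>u c. u @ [c \<noteq> a u]) [] l"

lemma length_tree_flip [simp]: "length (tree_flip a l) = length l"
  by (simp add: tree_flip_def)

lemma nth_tree_flip: "i < length l \<Longrightarrow> tree_flip a l ! i = (l ! i \<noteq> a (take i l))"
  by (simp add: tree_flip_def)

lemma tree_flip_Nil [simp]: "tree_flip a [] = []"
  by (simp add: tree_flip_def)

lemma tree_flip_snoc [simp]: "tree_flip a (l @ [c]) = tree_flip a l @ [c \<noteq> a l]"
  by (rule nth_equalityI) (auto simp: nth_tree_flip nth_append)

lemma tree_unflip_Nil [simp]: "tree_unflip a [] = []"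
  by (simp add: tree_unflip_def)

lemma tree_unflip_snoc [simp]: "tree_unflip a (l @ [c]) = tree_unflip a l @ [c \<noteq> a (tree_unflip a l)]"
  by (simp add: tree_unflip_def)

lemma tree_flip_unflip [simp]: "tree_flip a (tree_unflip a l) = l"
  by (induction l rule: rev_induct) auto

lemma tree_unflip_flip [simp]: "tree_unflip a (tree_flip a l) = l"
  by (induction l rule: rev_induct) auto

lemma tree_unflip_eq_tree_flip: "tree_unflip a = tree_flip (\<lambda>u. a (tree_unflip a u))"
proof
  show "tree_unflip a l = tree_flip (\<lambda>u. a (tree_unflip a u)) l" for l
    by (induction l rule: rev_induct) auto
qed

lemma take_tree_flip: "take n (tree_flip a l) = tree_flip a (take n l)"
proof (rule nth_equalityI)
  fix i assume "i < length (take n (tree_flip a l))"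
  then have i: "i < n" "i < length l" by auto
  then have "take n (tree_flip a l) ! i = (l ! i \<noteq> a (take i l))"
    by (simp add: nth_tree_flip)
  also have "\<dots> = tree_flip a (take n l) ! i"
    using i by (simp add: nth_tree_flip take_take min_def)
  finally show "take n (tree_flip a l) ! i = tree_flip a (take n l) ! i" .
qed simp

lemma tree_flip_inject: "tree_flip a l = tree_flip a m \<longleftrightarrow> l = m"
  by (metis tree_unflip_flip)

lemma tree_flip_prefix_iff: "prefix (tree_flip a l) (tree_flip a m) \<longleftrightarrow> prefix l m"
  by (simp add: prefix_iff_take take_tree_flip tree_flip_inject)

lemma tree_flip_append_replicate:
  "tree_flip a (l @ replicate k False) = tree_flip a l @ map (\<lambda>i. a (l @ replicate i False)) [0..<k]"
proof (induction k)
  case (Suc k)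
  have "tree_flip a (l @ replicate (Suc k) False) = tree_flip a ((l @ replicate k False) @ [False])"
    by (simp add: replicate_append_same)
  also have "\<dots> = tree_flip a (l @ replicate k False) @ [a (l @ replicate k False)]"
    by (simp only: tree_flip_snoc) simp
  finally show ?case using Suc.IH by simp
qed simp

lemma tree_flip_cong:
  "(\<And>i. i < length l \<Longrightarrow> a (take i l) = a' (take i l)) \<Longrightarrow> tree_flip a l = tree_flip a' l"
  by (simp add: tree_flip_def)

text \<open>Outside RO the identity, as Aut demands.\<close>

definition flip_aut :: "(bool list \<Rightarrow> bool) \<Rightarrow> (nat \<rightharpoonup> bool) set \<Rightarrow> (nat \<rightharpoonup> bool) set" where
  "flip_aut a U =
     (if U \<in> RO then {p \<in> Cond. \<forall>l. cext (node l) p \<longrightarrow> node (tree_flip a l) \<in> U} else U)"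

lemma flip_aut_RO:
  assumes U: "U \<in> RO"
  shows "flip_aut a U \<in> RO"
proof -
  define F where "F = {p \<in> Cond. \<forall>l. cext (node l) p \<longrightarrow> node (tree_flip a l) \<in> U}"
  have "F \<in> RO"
    unfolding RO_def
  proof (intro CollectI conjI ballI impI)
    show "F \<subseteq> Cond" by (auto simp: F_def)
    show "q \<in> F" if "p \<in> F" "q \<in> Cond" "cext q p" for p q
      using that cext_trans[OF _ that(3)] by (auto simp: F_def)
    show "p \<in> F"
      if p: "p \<in> Cond" and dense: "\<forall>q\<in>Cond. cext q p \<longrightarrow> (\<exists>r\<in>Cond. cext r q \<and> r \<in> F)" for p
      unfolding F_def
    proof (intro CollectI conjI p allI impI)
      fix l assume l: "cext (node l) p"
      show "node (tree_flip a l) \<in> U"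
      proof (rule RO_memI[OF U node_in_Cond], intro ballI impI)
        fix q assume q: "q \<in> Cond" "cext q (node (tree_flip a l))"
        obtain m where m: "prefix (tree_flip a l) m" "cext (node m) q"
          using exists_node_below[OF q] by blast
        have "prefix l (tree_unflip a m)"
          using m(1) tree_flip_prefix_iff[of a l "tree_unflip a m"] by simp
        then have "cext (node (tree_unflip a m)) p"
          using cext_trans[OF _ l] cext_node_iff_prefix by blast
        then obtain r where r: "r \<in> Cond" "cext r (node (tree_unflip a m))" "r \<in> F"
          using dense node_in_Cond by blast
        obtain l' where l': "prefix (tree_unflip a m) l'" "cext (node l') r"
          using exists_node_below[OF r(1,2)] by blast
        have "node (tree_flip a l') \<in> U" using r(3) l'(2) by (auto simp: F_def)
        moreover have "prefix m (tree_flip a l')"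
          using l'(1) tree_flip_prefix_iff[of a "tree_unflip a m" l'] by simp
        ultimately show "\<exists>r\<in>Cond. cext r q \<and> r \<in> U"
          using cext_trans[OF _ m(2)] cext_node_iff_prefix node_in_Cond by blast
      qed
    qed
  qed
  then show ?thesis using U by (simp add: flip_aut_def F_def)
qed

lemma node_in_flip_aut:
  assumes U: "U \<in> RO"
  shows "node l \<in> flip_aut a U \<longleftrightarrow> node (tree_flip a l) \<in> U"
proof -
  have "node (tree_flip a m) \<in> U" if "node (tree_flip a l) \<in> U" "cext (node m) (node l)" for m
    using that extension_closed_prefix[OF RO_extension_closed[OF U]]
    by (simp add: cext_node_iff_prefix tree_flip_prefix_iff)
  then show ?thesis using U by (auto simp: flip_aut_def)
qed

lemma flip_aut_Int: "U \<in> RO \<Longrightarrow> V \<in> RO \<Longrightarrow> flip_aut a (U \<inter> V) = flip_aut a U \<inter> flip_aut a V"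
  by (rule RO_eqI_nodes) (simp_all add: flip_aut_RO RO_Int node_in_flip_aut)

lemma flip_aut_bneg:
  assumes U: "U \<in> RO"
  shows "flip_aut a (bneg U) = bneg (flip_aut a U)"
proof (rule RO_eqI_nodes)
  have U': "extension_closed U" "extension_closed (flip_aut a U)"
    using U flip_aut_RO RO_extension_closed by blast+
  show "flip_aut a (bneg U) \<in> RO" "bneg (flip_aut a U) \<in> RO"
    using U' flip_aut_RO bneg_RO by blast+
  fix l
  have "node l \<in> flip_aut a (bneg U) \<longleftrightarrow> (\<forall>m. prefix (tree_flip a l) m \<longrightarrow> node m \<notin> U)"
    by (simp add: node_in_flip_aut[OF bneg_RO[OF U'(1)]] node_in_bneg_iff[OF U'(1)])
  also have "\<dots> \<longleftrightarrow> (\<forall>m. prefix l m \<longrightarrow> node (tree_flip a m) \<notin> U)"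
  proof
    assume none: "\<forall>m. prefix l m \<longrightarrow> node (tree_flip a m) \<notin> U"
    show "\<forall>m. prefix (tree_flip a l) m \<longrightarrow> node m \<notin> U"
    proof (intro allI impI)
      fix m assume "prefix (tree_flip a l) m"
      then have "prefix l (tree_unflip a m)"
        using tree_flip_prefix_iff[of a l "tree_unflip a m"] by simp
      then show "node m \<notin> U" using none by fastforce
    qed
  qed (simp add: tree_flip_prefix_iff)
  also have "\<dots> \<longleftrightarrow> node l \<in> bneg (flip_aut a U)"
    by (simp add: node_in_flip_aut[OF U] node_in_bneg_iff[OF U'(2)])
  finally show "node l \<in> flip_aut a (bneg U) \<longleftrightarrow> node l \<in> bneg (flip_aut a U)" .
qed

lemma flip_aut_inverse:
  assumes "U \<in> RO" and "\<And>l. tree_flip a' (tree_flip a l) = l"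
  shows "flip_aut a (flip_aut a' U) = U"
  by (rule RO_eqI_nodes) (simp_all add: assms flip_aut_RO node_in_flip_aut)

lemma flip_aut_in_Aut: "flip_aut a \<in> Aut"
proof -
  define a' where "a' = (\<lambda>u. a (tree_unflip a u))"
  have inv: "tree_flip a' (tree_flip a l) = l" "tree_flip a (tree_flip a' l) = l" for l
    by (simp_all add: a'_def tree_unflip_eq_tree_flip[symmetric])
  have "bij_betw (flip_aut a) RO RO"
    by (rule bij_betw_byWitness[where f' = "flip_aut a'"])
       (auto simp: flip_aut_inverse inv flip_aut_RO)
  moreover have "flip_aut a U = U" if "U \<notin> RO" for U
    using that by (simp add: flip_aut_def)
  ultimately show ?thesis
    unfolding Aut_def by (simp add: flip_aut_Int flip_aut_bneg)
qed

lemma flip_aut_fixes: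
  assumes U: "U \<in> RO" and supp: "\<And>u. a u \<Longrightarrow> node u \<in> U"
  shows "flip_aut a U = U"
proof (rule RO_eqI_nodes[OF flip_aut_RO[OF U] U])
  have U': "extension_closed U" using U by (rule RO_extension_closed)
  have "(node (tree_flip a l) \<in> U \<longleftrightarrow> node l \<in> U) \<and> (node l \<notin> U \<longrightarrow> tree_flip a l = l)" for l
  proof (induction l rule: rev_induct)
    case (snoc c l)
    show ?case
    proof (cases "node l \<in> U")
      case True
      moreover have "node (tree_flip a l) \<in> U" using True snoc.IH by blast
      ultimately have "node (l @ [c]) \<in> U" "node (tree_flip a (l @ [c])) \<in> U"
        using extension_closed_prefix[OF U'] by (simp_all add: prefixI)
      then show ?thesis by blast
    next
      case False
      then have "tree_flip a l = l" "\<not> a l" using snoc.IH supp by blast+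
      then show ?thesis by simp
    qed
  qed simp
  then show "node l \<in> flip_aut a U \<longleftrightarrow> node l \<in> U" for l
    using node_in_flip_aut[OF U] by blast
qed

lemma flip_aut_opposite:
  assumes X: "\<forall>(n, c)\<in>X. c \<in> RO"
    and n: "node (tree_flip a1 r) \<in> mem_val n X" "node (tree_flip a2 r) \<in> bneg (mem_val n X)"
  shows "flip_aut a1 \<noteq> flip_aut a2"
    and "node r \<notin> beq (name_app (flip_aut a1) X) (name_app (flip_aut a2) X)"
proof -
  have M: "mem_val n X \<in> RO" "bneg (mem_val n X) \<in> RO"
    by (simp_all add: mem_val_RO bneg_RO RO_extension_closed)
  have r: "node r \<in> flip_aut a1 (mem_val n X)" "node r \<in> flip_aut a2 (bneg (mem_val n X))"
    using n by (simp_all add: node_in_flip_aut[OF M(1)] node_in_flip_aut[OF M(2)])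
  show "flip_aut a1 \<noteq> flip_aut a2"
    using Aut_opposite_neq[OF flip_aut_in_Aut r(1) _ M(1)] r(2) by blast
  show "node r \<notin> beq (name_app (flip_aut a1) X) (name_app (flip_aut a2) X)"
    by (rule Aut_opposite_not_in_beq[OF flip_aut_in_Aut flip_aut_in_Aut X r])
qed

section \<open>A perfect family of flip functions\<close>

definition pair_above ::
  "(bool list \<Rightarrow> bool list \<Rightarrow> bool) \<Rightarrow> nat \<Rightarrow> bool list \<Rightarrow> bool list \<Rightarrow> bool list \<times> bool list \<Rightarrow> bool"
where
  "pair_above G N Y1 Y2 zz \<longleftrightarrow> length (fst zz) = N \<and> length (snd zz) = N
     \<and> prefix Y1 (fst zz) \<and> prefix Y2 (snd zz) \<and> G (fst zz) (snd zz)"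

text \<open>The two targets must have equal length: they are to be the images of a single node
  under two length-preserving flips.\<close>

definition levelwise_dense :: "(bool list \<Rightarrow> bool list \<Rightarrow> bool) \<Rightarrow> bool" where
  "levelwise_dense G \<longleftrightarrow> (\<forall>Y1 Y2. \<forall>\<^sub>F N in sequentially. \<exists>zz. pair_above G N Y1 Y2 zz)"

definition enum_node :: "nat \<Rightarrow> bool list" where
  "enum_node j = from_nat (fst (prod_decode j))"

lemma enum_node_infinitely_often: "\<exists>j. enum_node j = q \<and> d < j"
proof (intro exI conjI)
  show "enum_node (prod_encode (to_nat q, Suc d)) = q" by (simp add: enum_node_def)
  show "d < prod_encode (to_nat q, Suc d)" using le_prod_encode_2[of "Suc d" "to_nat q"] by simp
qed

definition fun_prefix :: "nat \<Rightarrow> (nat \<Rightarrow> bool) \<Rightarrow> bool list" where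
  "fun_prefix j f = map f [0..<j]"

definition fill_false :: "bool list \<Rightarrow> nat \<Rightarrow> bool" where
  "fill_false s i \<longleftrightarrow> i < length s \<and> s ! i"

lemma length_fun_prefix [simp]: "length (fun_prefix j f) = j"
  by (simp add: fun_prefix_def)

lemma fun_prefix_fill_false: "length s = j \<Longrightarrow> fun_prefix j (fill_false s) = s"
  by (rule nth_equalityI) (auto simp: fun_prefix_def fill_false_def)

lemma take_fun_prefix: "i \<le> j \<Longrightarrow> take i (fun_prefix j f) = fun_prefix i f"
  by (simp add: fun_prefix_def take_map)

definition distinct_pairs :: "nat \<Rightarrow> (bool list \<times> bool list) set" where
  "distinct_pairs j = {(s, s'). length s = j \<and> length s' = j \<and> s \<noteq> s'}"

lemma finite_distinct_pairs: "finite (distinct_pairs j)"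
proof (rule finite_subset)
  show "distinct_pairs j \<subseteq> {s. length s = j} \<times> {s. length s = j}"
    by (auto simp: distinct_pairs_def)
  have "finite {s :: bool list. set s \<subseteq> UNIV \<and> length s = j}"
    by (rule finite_lists_length_eq) simp
  then have "finite {s :: bool list. length s = j}" by (simp only: subset_UNIV simp_thms)
  then show "finite ({s :: bool list. length s = j} \<times> {s :: bool list. length s = j})"
    using finite_cartesian_product by blast
qed

definition block_root :: "nat \<Rightarrow> nat \<Rightarrow> bool list \<Rightarrow> bool list \<Rightarrow> bool list" where
  "block_root j E s s' = enum_node j @ replicate E False @ s @ s'"

lemma length_block_root:
  "(s, s') \<in> distinct_pairs j \<Longrightarrow> length (block_root j E s s') = length (enum_node j) + E + 2 * j"
  by (simp add: block_root_def distinct_pairs_def)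

lemma block_root_inj:
  assumes "(s, s') \<in> distinct_pairs j" "(t, t') \<in> distinct_pairs j"
    and "block_root j E s s' @ replicate k False = block_root j E t t' @ replicate k' False"
  shows "t = s \<and> t' = s' \<and> k' = k"
proof -
  have "s @ s' @ replicate k False = t @ t' @ replicate k' False"
    using assms(3) by (simp add: block_root_def)
  then show ?thesis
    using assms(1,2) by (auto simp: distinct_pairs_def)
qed

type_synonym flip_family = "(nat \<Rightarrow> bool) \<Rightarrow> bool list \<Rightarrow> bool"

text \<open>By stage_flips_cong, P (fill_false s) stands for the flips of stage j of every f
  with f|j = s.\<close>

definition block_fits ::
  "(bool list \<Rightarrow> bool list \<Rightarrow> bool) \<Rightarrow> nat \<Rightarrow> nat \<Rightarrow> flip_family \<Rightarrow> nat \<Rightarrow> bool list \<Rightarrow> bool list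
     \<Rightarrow> bool list \<times> bool list \<Rightarrow> bool"
where
  "block_fits G j E P L s s' zz \<longleftrightarrow>
     pair_above G (length (block_root j E s s') + L)
       (tree_flip (P (fill_false s)) (block_root j E s s'))
       (tree_flip (P (fill_false s')) (block_root j E s s')) zz"

definition block_height ::
  "(bool list \<Rightarrow> bool list \<Rightarrow> bool) \<Rightarrow> nat \<Rightarrow> nat \<Rightarrow> flip_family \<Rightarrow> nat"
where
  "block_height G j E P = (SOME L. \<forall>(s, s')\<in>distinct_pairs j. \<exists>zz. block_fits G j E P L s s' zz)"

definition block_targets ::
  "(bool list \<Rightarrow> bool list \<Rightarrow> bool) \<Rightarrow> nat \<Rightarrow> nat \<Rightarrow> flip_family \<Rightarrow> bool list \<Rightarrow> bool list
     \<Rightarrow> bool list \<times> bool list"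
where
  "block_targets G j E P s s' = (SOME zz. block_fits G j E P (block_height G j E P) s s' zz)"

lemma block_targets_fit:
  assumes G: "levelwise_dense G" and ss': "(s, s') \<in> distinct_pairs j"
  shows "block_fits G j E P (block_height G j E P) s s' (block_targets G j E P s s')"
proof -
  have "\<forall>\<^sub>F L in sequentially. \<exists>zz. block_fits G j E P L t t' zz" for t t'
  proof -
    let ?\<rho> = "block_root j E t t'"
    have "\<forall>\<^sub>F N in sequentially. \<exists>zz. pair_above G N
        (tree_flip (P (fill_false t)) ?\<rho>) (tree_flip (P (fill_false t')) ?\<rho>) zz"
      using G by (simp add: levelwise_dense_def)
    then obtain N0 where "\<forall>N\<ge>N0. \<exists>zz. pair_above G N
        (tree_flip (P (fill_false t)) ?\<rho>) (tree_flip (P (fill_false t')) ?\<rho>) zz"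
      by (auto simp: eventually_sequentially)
    then show ?thesis
      unfolding block_fits_def eventually_sequentially by (intro exI[of _ N0]) simp
  qed
  then have "\<forall>\<^sub>F L in sequentially. \<forall>y\<in>distinct_pairs j. \<exists>zz. block_fits G j E P L (fst y) (snd y) zz"
    by (intro eventually_ball_finite[OF finite_distinct_pairs] ballI)
  then obtain L where "\<forall>y\<in>distinct_pairs j. \<exists>zz. block_fits G j E P L (fst y) (snd y) zz"
    using eventually_happens'[OF sequentially_bot] by blast
  then have "\<forall>(t, t')\<in>distinct_pairs j. \<exists>zz. block_fits G j E P L t t' zz"
    by (simp add: case_prod_unfold)
  then have "\<forall>(t, t')\<in>distinct_pairs j. \<exists>zz. block_fits G j E P (block_height G j E P) t t' zz"
    unfolding block_height_def by (rule someI)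
  then have "\<exists>zz. block_fits G j E P (block_height G j E P) s s' zz"
    using ss' by blast
  then show ?thesis
    unfolding block_targets_def by (rule someI_ex)
qed

text \<open>If the node enumerated at j lies in T, stage j reserves, for every pair s \<noteq> s' of
  length j, the zero path of length block_height above block_root j E s s'.  The padding of length E lifts it above all nodes
  flipped at earlier stages, and the suffix s @ s' keeps the paths of different pairs apart.
  Along this path an f with f|j = s flips so that the path is mapped onto the first target,
  and an f with f|j = s' so that it is mapped onto the second (tree_flip_block).\<close>

definition new_flips ::
  "(bool list \<Rightarrow> bool) \<Rightarrow> (bool list \<Rightarrow> bool list \<Rightarrow> bool) \<Rightarrow> nat \<Rightarrow> nat \<Rightarrow> flip_family
     \<Rightarrow> flip_family"
where
  "new_flips T G j E P f u \<longleftrightarrow> T (enum_node j) \<and>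
     (\<exists>(s, s')\<in>distinct_pairs j. \<exists>k < block_height G j E P.
        u = block_root j E s s' @ replicate k False \<and>
        (if fun_prefix j f = s then fst (block_targets G j E P s s') ! length u
         else fun_prefix j f = s' \<and> snd (block_targets G j E P s s') ! length u))"

primrec stage ::
  "(bool list \<Rightarrow> bool) \<Rightarrow> (bool list \<Rightarrow> bool list \<Rightarrow> bool) \<Rightarrow> nat \<Rightarrow> nat \<times> flip_family"
where
  "stage T G 0 = (0, \<lambda>f u. False)"
| "stage T G (Suc j) =
     (length (enum_node j) + fst (stage T G j) + 2 * j
        + block_height G j (fst (stage T G j)) (snd (stage T G j)),
      \<lambda>f u. snd (stage T G j) f u \<or> new_flips T G j (fst (stage T G j)) (snd (stage T G j)) f u)"

abbreviation stage_height where "stage_height T G j \<equiv> fst (stage T G j)"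
abbreviation stage_flips where "stage_flips T G j \<equiv> snd (stage T G j)"

definition flip_of :: "(bool list \<Rightarrow> bool) \<Rightarrow> (bool list \<Rightarrow> bool list \<Rightarrow> bool) \<Rightarrow> flip_family" where
  "flip_of T G f u \<longleftrightarrow> (\<exists>j. stage_flips T G j f u)"

lemma new_flips_length:
  assumes "new_flips T G j E P f u"
  shows "length (enum_node j) + E + 2 * j \<le> length u"
    and "length u < length (enum_node j) + E + 2 * j + block_height G j E P"
  using assms by (auto simp: new_flips_def length_block_root)

lemma stage_height_mono: "i \<le> j \<Longrightarrow> stage_height T G i \<le> stage_height T G j"
  by (rule lift_Suc_mono_le[of "stage_height T G"]) simp_all

lemma stage_flips_mono: "i \<le> j \<Longrightarrow> stage_flips T G i f u \<Longrightarrow> stage_flips T G j f u"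
  by (induction j rule: dec_induct) simp_all

lemma stage_flips_length: "stage_flips T G j f u \<Longrightarrow> length u < stage_height T G j"
proof (induction j)
  case (Suc j)
  then show ?case
    using new_flips_length[of T G j] by auto
qed simp

lemma stage_flips_stable:
  assumes "i \<le> j" and "length u < stage_height T G i"
  shows "stage_flips T G j f u \<longleftrightarrow> stage_flips T G i f u"
  using assms(1)
proof (induction j rule: dec_induct)
  case (step j)
  have "\<not> new_flips T G j (stage_height T G j) (stage_flips T G j) f u"
    using new_flips_length(1)[of T G j] stage_height_mono[of i j T G] step.hyps assms(2)
    by fastforce
  then show ?case using step.IH by simp
qed simp

lemma flip_of_eq_stage_flips:
  assumes "length u < stage_height T G j"
  shows "flip_of T G f u \<longleftrightarrow> stage_flips T G j f u"
proof
  assume "flip_of T G f u"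
  then obtain i where i: "stage_flips T G i f u" by (auto simp: flip_of_def)
  show "stage_flips T G j f u"
  proof (cases "i \<le> j")
    case True
    then show ?thesis using stage_flips_mono i by blast
  next
    case False
    then show ?thesis using stage_flips_stable[of j i, OF _ assms] i by simp
  qed
qed (auto simp: flip_of_def)

lemma stage_flips_cong:
  "fun_prefix j f = fun_prefix j g \<Longrightarrow> stage_flips T G j f u \<longleftrightarrow> stage_flips T G j g u"
proof (induction j arbitrary: u)
  case (Suc j)
  have "fun_prefix j f = fun_prefix j g"
    using arg_cong[OF Suc.prems, of "take j"] by (simp add: take_fun_prefix)
  then show ?case using Suc.IH by (simp add: new_flips_def)
qed simp

lemma flip_of_support:
  assumes up: "\<And>l m. T l \<Longrightarrow> prefix l m \<Longrightarrow> T m"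
  shows "flip_of T G f u \<Longrightarrow> T u"
proof -
  have "T u" if "stage_flips T G j f u" for j
    using that
  proof (induction j)
    case (Suc j)
    show ?case
    proof (cases "stage_flips T G j f u")
      case False
      then have "new_flips T G j (stage_height T G j) (stage_flips T G j) f u"
        using Suc.prems by simp
      then show ?thesis
        unfolding new_flips_def block_root_def using up by (auto intro: prefixI)
    qed (rule Suc.IH)
  qed simp
  then show "flip_of T G f u \<Longrightarrow> T u" by (auto simp: flip_of_def)
qed

lemma new_flips_block:
  assumes T: "T (enum_node j)" and ss': "(s, s') \<in> distinct_pairs j"
    and k: "k < block_height G j E P"
  shows "new_flips T G j E P f (block_root j E s s' @ replicate k False) \<longleftrightarrow>
    (if fun_prefix j f = s then fst (block_targets G j E P s s') ! (length (block_root j E s s') + k)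
     else fun_prefix j f = s' \<and> snd (block_targets G j E P s s') ! (length (block_root j E s s') + k))"
proof
  assume "new_flips T G j E P f (block_root j E s s' @ replicate k False)"
  then obtain t t' k' where tt': "(t, t') \<in> distinct_pairs j"
    and eq: "block_root j E s s' @ replicate k False = block_root j E t t' @ replicate k' False"
    and val: "if fun_prefix j f = t
        then fst (block_targets G j E P t t') ! length (block_root j E s s' @ replicate k False)
        else fun_prefix j f = t' \<and>
          snd (block_targets G j E P t t') ! length (block_root j E s s' @ replicate k False)"
    unfolding new_flips_def by blast
  have st: "t = s" "t' = s'" using block_root_inj[OF ss' tt' eq] by simp_all
  show "if fun_prefix j f = s then fst (block_targets G j E P s s') ! (length (block_root j E s s') + k)
     else fun_prefix j f = s' \<and> snd (block_targets G j E P s s') ! (length (block_root j E s s') + k)"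
    using val unfolding st by (simp split: if_splits)
next
  assume val: "if fun_prefix j f = s then fst (block_targets G j E P s s') ! (length (block_root j E s s') + k)
     else fun_prefix j f = s' \<and> snd (block_targets G j E P s s') ! (length (block_root j E s s') + k)"
  let ?u = "block_root j E s s' @ replicate k False"
  have "?u = block_root j E s s' @ replicate k False \<and>
    (if fun_prefix j f = s then fst (block_targets G j E P s s') ! length ?u
     else fun_prefix j f = s' \<and> snd (block_targets G j E P s s') ! length ?u)"
    using val by (simp split: if_splits)
  then show "new_flips T G j E P f ?u"
    unfolding new_flips_def using T ss' k by blast
qed

lemma flip_of_old_stage:
  assumes "length u < length (enum_node j) + stage_height T G j + 2 * j"
  shows "flip_of T G f u \<longleftrightarrow> stage_flips T G j f u"
proof -
  have "\<not> new_flips T G j (stage_height T G j) (stage_flips T G j) f u"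
    using new_flips_length(1) assms by fastforce
  then show ?thesis using flip_of_eq_stage_flips[of u T G "Suc j"] assms by auto
qed

lemma flip_of_new_stage:
  assumes "stage_height T G j \<le> length u" and "length u < stage_height T G (Suc j)"
  shows "flip_of T G f u \<longleftrightarrow> new_flips T G j (stage_height T G j) (stage_flips T G j) f u"
  using flip_of_eq_stage_flips[OF assms(2)] stage_flips_length[of T G j f u] assms(1) by auto

lemma tree_flip_block:
  fixes T :: "bool list \<Rightarrow> bool" and G :: "bool list \<Rightarrow> bool list \<Rightarrow> bool"
    and j :: nat and s s' :: "bool list"
  defines "E \<equiv> stage_height T G j" and "P \<equiv> stage_flips T G j"
  defines "\<rho> \<equiv> block_root j E s s'" and "L \<equiv> block_height G j E P"
    and "zz \<equiv> block_targets G j E P s s'"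
  assumes G: "levelwise_dense G" and T: "T (enum_node j)" and ss': "(s, s') \<in> distinct_pairs j"
    and f: "fun_prefix j f \<in> {s, s'}"
  shows "tree_flip (flip_of T G f) (\<rho> @ replicate L False) = (if fun_prefix j f = s then fst zz else snd zz)"
proof -
  define t where "t = fun_prefix j f"
  define z where "z = (if t = s then fst zz else snd zz)"
  have "block_fits G j E P L s s' zz"
    unfolding L_def zz_def by (rule block_targets_fit[OF G ss'])
  then have z: "length z = length \<rho> + L" "prefix (tree_flip (P (fill_false t)) \<rho>) z"
    using f unfolding block_fits_def pair_above_def z_def t_def \<rho>_def by auto
  have \<rho>: "length \<rho> = length (enum_node j) + E + 2 * j"
    using ss' by (simp add: \<rho>_def length_block_root)
  have "tree_flip (flip_of T G f) \<rho> = tree_flip (P (fill_false t)) \<rho>"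
  proof (rule tree_flip_cong)
    fix i assume "i < length \<rho>"
    then have "flip_of T G f (take i \<rho>) = P f (take i \<rho>)"
      using flip_of_old_stage \<rho> by (simp add: E_def P_def)
    also have "\<dots> = P (fill_false t) (take i \<rho>)"
      unfolding P_def by (rule stage_flips_cong) (simp add: t_def fun_prefix_fill_false)
    finally show "flip_of T G f (take i \<rho>) = P (fill_false t) (take i \<rho>)" .
  qed
  moreover have "flip_of T G f (\<rho> @ replicate k False) = z ! (length \<rho> + k)" if "k < L" for k
  proof -
    have "flip_of T G f (\<rho> @ replicate k False) = new_flips T G j E P f (\<rho> @ replicate k False)"
      using flip_of_new_stage that \<rho> by (simp add: E_def P_def L_def)
    then show ?thesis
      using new_flips_block[of T j s s' k G E P f, OF T ss' that[unfolded L_def]] f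
      by (auto simp: z_def t_def \<rho>_def zz_def)
  qed
  ultimately have "tree_flip (flip_of T G f) (\<rho> @ replicate L False)
      = tree_flip (P (fill_false t)) \<rho> @ map (\<lambda>k. z ! (length \<rho> + k)) [0..<L]"
    by (simp add: tree_flip_append_replicate)
  also have "\<dots> = z"
    using prefix_append_map_nth[OF z(2)] z(1) by simp
  finally show ?thesis by (simp add: z_def t_def)
qed

lemma flip_of_separates:
  assumes G: "levelwise_dense G" and "f \<noteq> g" and q: "T q"
  shows "\<exists>r. prefix q r \<and> G (tree_flip (flip_of T G f) r) (tree_flip (flip_of T G g) r)"
proof -
  obtain d where d: "f d \<noteq> g d" using \<open>f \<noteq> g\<close> by blast
  obtain j where j: "enum_node j = q" "d < j" using enum_node_infinitely_often by blast
  let ?s = "fun_prefix j f" and ?s' = "fun_prefix j g"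
  have "?s ! d \<noteq> ?s' ! d" using d j(2) by (simp add: fun_prefix_def)
  then have ss': "(?s, ?s') \<in> distinct_pairs j" by (auto simp: distinct_pairs_def)
  let ?E = "stage_height T G j" and ?P = "stage_flips T G j"
  let ?r = "block_root j ?E ?s ?s' @ replicate (block_height G j ?E ?P) False"
    and ?zz = "block_targets G j ?E ?P ?s ?s'"
  have "tree_flip (flip_of T G f) ?r = fst ?zz" "tree_flip (flip_of T G g) ?r = snd ?zz"
    using tree_flip_block[OF G _ ss'] j q ss' by (auto simp: distinct_pairs_def)
  moreover have "G (fst ?zz) (snd ?zz)"
    using block_targets_fit[OF G ss'] by (simp add: block_fits_def pair_above_def)
  moreover have "prefix q ?r" using j(1) by (simp add: block_root_def)
  ultimately show ?thesis by metis
qed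

section \<open>Opposite decisions about a non-ground name\<close>

definition decide_oppositely ::
  "('a \<times> (nat \<rightharpoonup> bool) set) set \<Rightarrow> (nat \<rightharpoonup> bool) \<Rightarrow> (nat \<rightharpoonup> bool) \<Rightarrow> bool"
where
  "decide_oppositely X p q \<longleftrightarrow> (\<exists>n.
     p \<in> mem_val n X \<and> q \<in> bneg (mem_val n X) \<or> p \<in> bneg (mem_val n X) \<and> q \<in> mem_val n X)"

lemma decide_oppositely_cext:
  assumes "decide_oppositely X p q" "p' \<in> Cond" "q' \<in> Cond" "cext p' p" "cext q' q"
  shows "decide_oppositely X p' q'"
proof -
  have "extension_closed (mem_val n X)" "extension_closed (bneg (mem_val n X))" for n
    by (simp_all add: RO_extension_closed mem_val_RO bneg_extension_closed)
  then show ?thesis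
    using assms unfolding decide_oppositely_def by (meson extension_closedD)
qed

lemma flip_aut_decide_oppositely:
  assumes X: "\<forall>(n, c)\<in>X. c \<in> RO"
    and "decide_oppositely X (node (tree_flip a1 r)) (node (tree_flip a2 r))"
  shows "flip_aut a1 \<noteq> flip_aut a2"
    and "node r \<notin> beq (name_app (flip_aut a1) X) (name_app (flip_aut a2) X)"
proof -
  have beq_sym: "beq Y Z = beq Z Y" for Y Z :: "('a \<times> (nat \<rightharpoonup> bool) set) set"
    by (auto simp: beq_def)
  from assms(2) obtain n where
    "node (tree_flip a1 r) \<in> mem_val n X \<and> node (tree_flip a2 r) \<in> bneg (mem_val n X) \<or>
     node (tree_flip a2 r) \<in> mem_val n X \<and> node (tree_flip a1 r) \<in> bneg (mem_val n X)"
    unfolding decide_oppositely_def by blast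
  then show "flip_aut a1 \<noteq> flip_aut a2"
    and "node r \<notin> beq (name_app (flip_aut a1) X) (name_app (flip_aut a2) X)"
    using flip_aut_opposite[OF X] beq_sym by metis+
qed

lemma bsubset_check_if_decided:
  assumes X: "\<forall>(n, c)\<in>X. c \<in> RO" and p: "p \<in> Cond"
    and decided: "\<And>n. p \<notin> mem_val n X \<Longrightarrow> p \<in> bneg (mem_val n X)"
  shows "p \<in> bsubset X (check {n. p \<in> mem_val n X})"
  unfolding bsubset_def binf_def
proof (intro IntI p InterI)
  let ?y = "{n. p \<in> mem_val n X}"
  fix W assume "W \<in> {bimp c (mem_val n (check ?y)) | n c. (n, c) \<in> X}"
  then obtain n c where W: "W = bimp c (mem_val n (check ?y))" and nc: "(n, c) \<in> X" by blast
  show "p \<in> W"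
  proof (cases "n \<in> ?y")
    case True
    then have "mem_val n (check ?y) = Cond" by (simp add: mem_val_check)
    then show ?thesis
      unfolding W bimp_def by (intro bsup_memI[OF p p]) (simp_all add: RO_extension_closed Cond_RO)
  next
    case False
    then have "p \<in> bneg (mem_val n X)" by (intro decided) simp
    moreover have "c \<in> RO" using X nc by blast
    ultimately have "p \<in> bneg c" using bneg_antimono[OF mem_val_upper[OF nc]] by blast
    then show ?thesis
      unfolding W bimp_def by (rule bsup_memI[OF p]) (simp_all add: bneg_extension_closed)
  qed
qed

lemma check_bsubset_mem_val:
  assumes p: "p \<in> Cond"
  shows "p \<in> bsubset (check {n. p \<in> mem_val n X}) X"
  unfolding bsubset_def binf_def
proof (intro IntI p InterI)
  fix W assume "W \<in> {bimp c (mem_val n X) | n c. (n, c) \<in> check {n. p \<in> mem_val n X}}"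
  then obtain n c where W: "W = bimp c (mem_val n X)" and "(n, c) \<in> check {n. p \<in> mem_val n X}"
    by blast
  then have "p \<in> mem_val n X" by (simp add: check_def)
  then show "p \<in> W"
    unfolding W bimp_def by (rule bsup_memI[OF p]) (simp_all add: RO_extension_closed mem_val_RO)
qed

lemma exists_undecided:
  fixes X :: "('a \<times> (nat \<rightharpoonup> bool) set) set"
  assumes X: "\<forall>(n, c)\<in>X. c \<in> RO"
    and not_ground: "bsup {beq X (check y) | y :: 'a set. True} = {}"
    and p: "p \<in> Cond"
  shows "\<exists>n. p \<notin> mem_val n X \<and> p \<notin> bneg (mem_val n X)"
proof (rule ccontr)
  assume "\<not> ?thesis"
  then have "p \<in> beq X (check {n. p \<in> mem_val n X})"
    using bsubset_check_if_decided[OF X p] check_bsubset_mem_val[OF p] by (auto simp: beq_def)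
  then have "p \<in> bsup {beq X (check y) | y :: 'a set. True}"
    by (rule bsup_memI[OF p]) (auto simp: extension_closed_beq)
  then show False using not_ground by simp
qed

lemma opposite_decisions_below:
  fixes X :: "('a \<times> (nat \<rightharpoonup> bool) set) set"
  assumes X: "\<forall>(n, c)\<in>X. c \<in> RO"
    and not_ground: "bsup {beq X (check y) | y :: 'a set. True} = {}"
    and p1: "p1 \<in> Cond" and p2: "p2 \<in> Cond"
  shows "\<exists>q1\<in>Cond. \<exists>q2\<in>Cond. cext q1 p1 \<and> cext q2 p2 \<and> decide_oppositely X q1 q2"
proof -
  obtain n where n: "p2 \<notin> mem_val n X" "p2 \<notin> bneg (mem_val n X)"
    using exists_undecided[OF X not_ground p2] by blast
  let ?M = "mem_val n X"
  have "\<not> (\<forall>q\<in>Cond. cext q p2 \<longrightarrow> q \<notin> ?M)"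
    using n(2) p2 by (simp add: bneg_def)
  then obtain qa where qa: "qa \<in> Cond" "cext qa p2" "qa \<in> ?M" by blast
  have "\<not> (\<forall>q\<in>Cond. cext q p2 \<longrightarrow> (\<exists>r\<in>Cond. cext r q \<and> r \<in> ?M))"
    using n(1) RO_memI[OF mem_val_RO[of n X] p2] by blast
  then obtain qb where qb: "qb \<in> Cond" "cext qb p2" "\<forall>r\<in>Cond. cext r qb \<longrightarrow> r \<notin> ?M"
    by blast
  then have "qb \<in> bneg ?M" by (simp add: bneg_def)
  show ?thesis
  proof (cases "p1 \<in> bneg ?M")
    case True
    then have "decide_oppositely X p1 qa"
      using qa(3) unfolding decide_oppositely_def by blast
    then show ?thesis using p1 qa(1,2) cext_refl by blast
  next
    case False
    then have "\<not> (\<forall>q\<in>Cond. cext q p1 \<longrightarrow> q \<notin> ?M)"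
      using p1 by (simp add: bneg_def)
    then obtain q1 where q1: "q1 \<in> Cond" "cext q1 p1" "q1 \<in> ?M" by blast
    then have "decide_oppositely X q1 qb"
      using \<open>qb \<in> bneg ?M\<close> unfolding decide_oppositely_def by blast
    then show ?thesis using q1(1,2) qb(1,2) by blast
  qed
qed

lemma levelwise_dense_decide_oppositely:
  fixes X :: "('a \<times> (nat \<rightharpoonup> bool) set) set"
  assumes X: "\<forall>(n, c)\<in>X. c \<in> RO"
    and not_ground: "bsup {beq X (check y) | y :: 'a set. True} = {}"
  shows "levelwise_dense (\<lambda>z1 z2. decide_oppositely X (node z1) (node z2))"
  unfolding levelwise_dense_def
proof (intro allI)
  fix Y1 Y2
  obtain q1 q2 where q: "q1 \<in> Cond" "q2 \<in> Cond" "cext q1 (node Y1)" "cext q2 (node Y2)"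
    and opp: "decide_oppositely X q1 q2"
    using opposite_decisions_below[OF X not_ground node_in_Cond node_in_Cond] by blast
  have "\<forall>\<^sub>F N in sequentially. (\<exists>l. length l = N \<and> prefix Y1 l \<and> cext (node l) q1)
      \<and> (\<exists>l. length l = N \<and> prefix Y2 l \<and> cext (node l) q2)"
    using eventually_nodes_below[OF q(1,3)] eventually_nodes_below[OF q(2,4)]
    by (rule eventually_conj)
  then show "\<forall>\<^sub>F N in sequentially. \<exists>zz. pair_above (\<lambda>z1 z2. decide_oppositely X (node z1) (node z2)) N Y1 Y2 zz"
  proof (rule eventually_mono)
    fix N
    assume "(\<exists>l. length l = N \<and> prefix Y1 l \<and> cext (node l) q1)
      \<and> (\<exists>l. length l = N \<and> prefix Y2 l \<and> cext (node l) q2)"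
    then obtain l1 l2 where "length l1 = N" "prefix Y1 l1" "cext (node l1) q1"
      "length l2 = N" "prefix Y2 l2" "cext (node l2) q2" by blast
    moreover have "decide_oppositely X (node l1) (node l2)"
      using decide_oppositely_cext[OF opp node_in_Cond node_in_Cond] calculation by blast
    ultimately show "\<exists>zz. pair_above (\<lambda>z1 z2. decide_oppositely X (node z1) (node z2)) N Y1 Y2 zz"
      by (intro exI[of _ "(l1, l2)"]) (simp add: pair_above_def)
  qed
qed

section \<open>The uncountable family of automorphisms\<close>

lemma flip_automorphisms_nonempty:
  fixes X :: "('a \<times> (nat \<rightharpoonup> bool) set) set"
  assumes X: "\<forall>(n, c)\<in>X. c \<in> RO"
    and not_ground: "bsup {beq X (check y) | y :: 'a set. True} = {}"
    and b: "b \<in> RO" "b \<noteq> {}"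
  obtains F :: "(nat \<Rightarrow> bool) \<Rightarrow> (nat \<rightharpoonup> bool) set \<Rightarrow> (nat \<rightharpoonup> bool) set"
  where "inj F" "range F \<subseteq> Aut" "\<And>f. F f b = b"
    "\<And>f g. f \<noteq> g \<Longrightarrow> b \<subseteq> bneg (beq (name_app (F f) X) (name_app (F g) X))"
proof
  define T where "T u \<longleftrightarrow> node u \<in> b" for u
  define G where "G z1 z2 \<longleftrightarrow> decide_oppositely X (node z1) (node z2)" for z1 z2
  define F where "F f = flip_aut (flip_of T G f)" for f
  have G: "levelwise_dense G"
    unfolding G_def using levelwise_dense_decide_oppositely[OF X not_ground] by simp
  have up: "T l \<Longrightarrow> prefix l m \<Longrightarrow> T m" for l m
    unfolding T_def using extension_closed_prefix[OF RO_extension_closed[OF b(1)]] by blast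
  have separates: "\<exists>r. prefix q r \<and> F f \<noteq> F g
      \<and> node r \<notin> beq (name_app (F f) X) (name_app (F g) X)"
    if fg: "f \<noteq> g" and q: "node q \<in> b" for f g q
  proof -
    obtain r where r: "prefix q r"
      "decide_oppositely X (node (tree_flip (flip_of T G f) r)) (node (tree_flip (flip_of T G g) r))"
      using flip_of_separates[OF G fg, of T q] q by (auto simp: T_def G_def)
    then show ?thesis
      using flip_aut_decide_oppositely[OF X r(2)] unfolding F_def by blast
  qed
  obtain q where q: "node q \<in> b" using RO_nonempty_node[OF b] by blast
  show "inj F"
  proof (rule injI)
    show "f = g" if "F f = F g" for f g
      using separates[OF _ q, of f g] that by blast
  qed
  show "range F \<subseteq> Aut"
    unfolding F_def using flip_aut_in_Aut by blast
  show "F f b = b" for f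
  proof -
    have "node u \<in> b" if "flip_of T G f u" for u
      using flip_of_support[OF up that] by (simp add: T_def)
    then show ?thesis unfolding F_def by (rule flip_aut_fixes[OF b(1)])
  qed
  show "b \<subseteq> bneg (beq (name_app (F f) X) (name_app (F g) X))" if fg: "f \<noteq> g" for f g
    by (rule subset_bneg_by_nodes[OF b(1) extension_closed_beq]) (use separates[OF fg] in blast)
qed

lemma flip_automorphisms:
  fixes X :: "('a \<times> (nat \<rightharpoonup> bool) set) set"
  assumes X: "\<forall>(n, c)\<in>X. c \<in> RO"
    and not_ground: "bsup {beq X (check y) | y :: 'a set. True} = {}"
    and b: "b \<in> RO"
  obtains F :: "(nat \<Rightarrow> bool) \<Rightarrow> (nat \<rightharpoonup> bool) set \<Rightarrow> (nat \<rightharpoonup> bool) set"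
  where "inj F" "range F \<subseteq> Aut" "\<And>f. F f b = b"
    "\<And>f g. f \<noteq> g \<Longrightarrow> b \<subseteq> bneg (beq (name_app (F f) X) (name_app (F g) X))"
proof (cases "b = {}")
  case True
  \<comment> \<open>the family built for the top element works, as automorphisms fix {}\<close>
  have "Cond \<noteq> {}" using node_in_Cond[of "[]"] by blast
  obtain F :: "(nat \<Rightarrow> bool) \<Rightarrow> (nat \<rightharpoonup> bool) set \<Rightarrow> (nat \<rightharpoonup> bool) set"
    where F: "inj F" "range F \<subseteq> Aut" "\<And>f. F f Cond = Cond"
      "\<And>f g. f \<noteq> g \<Longrightarrow> Cond \<subseteq> bneg (beq (name_app (F f) X) (name_app (F g) X))"
    using flip_automorphisms_nonempty[OF X not_ground Cond_RO \<open>Cond \<noteq> {}\<close>] by blast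
  show ?thesis
  proof (rule that[OF F(1,2)])
    show "F f b = b" for f
      using True Aut_empty F(2) by (simp add: image_subset_iff)
    show "b \<subseteq> bneg (beq (name_app (F f) X) (name_app (F g) X))" for f g
      using True by simp
  qed
next
  case False
  obtain F :: "(nat \<Rightarrow> bool) \<Rightarrow> (nat \<rightharpoonup> bool) set \<Rightarrow> (nat \<rightharpoonup> bool) set"
    where "inj F" "range F \<subseteq> Aut" "\<And>f. F f b = b"
      "\<And>f g. f \<noteq> g \<Longrightarrow> b \<subseteq> bneg (beq (name_app (F f) X) (name_app (F g) X))"
    using flip_automorphisms_nonempty[OF X not_ground b False] by blast
  then show ?thesis by (rule that)
qed

lemma uncountable_nat_bool_funs: "uncountable (UNIV :: (nat \<Rightarrow> bool) set)"
proof -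
  have "range e \<noteq> UNIV" for e :: "nat \<Rightarrow> nat \<Rightarrow> bool"
  proof
    assume "range e = UNIV"
    then have "(\<lambda>i. \<not> e i i) \<in> range e" by simp
    then obtain k where "(\<lambda>i. \<not> e i i) = e k" by blast
    then have "(\<not> e k k) = e k k" by (rule fun_cong)
    then show False by simp
  qed
  then show ?thesis unfolding uncountable_def by simp
qed

theorem lemma5p5:
  fixes X :: "('a \<times> (nat \<rightharpoonup> bool) set) set"
    and b :: "(nat \<rightharpoonup> bool) set"
  assumes names: "\<forall>(n, c)\<in>X. c \<in> RO"
    and not_ground: "bsup {beq X (check y) | y :: 'a set. True} = {}"
    and b: "b \<in> RO"
  shows "\<exists>A. A \<subseteq> Aut \<and> uncountable A \<and>
           (\<forall>\<sigma>\<in>A. \<forall>\<tau>\<in>A. \<sigma> \<noteq> \<tau> \<longrightarrow>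
              \<sigma> b = b \<and> b = \<tau> b \<and>
              b \<subseteq> bneg (beq (name_app \<sigma> X) (name_app \<tau> X)))"
proof -
  obtain F :: "(nat \<Rightarrow> bool) \<Rightarrow> (nat \<rightharpoonup> bool) set \<Rightarrow> (nat \<rightharpoonup> bool) set"
    where F: "inj F" "range F \<subseteq> Aut" "\<And>f. F f b = b"
    "\<And>f g. f \<noteq> g \<Longrightarrow> b \<subseteq> bneg (beq (name_app (F f) X) (name_app (F g) X))"
    using flip_automorphisms[OF names not_ground b] by blast
  have "uncountable (range F)"
  proof
    assume "countable (range F)"
    then have "countable (UNIV :: (nat \<Rightarrow> bool) set)" by (rule countable_image_inj_on[OF _ F(1)])
    then show False using uncountable_nat_bool_funs by simp
  qed
  moreover have "\<forall>\<sigma>\<in>range F. \<forall>\<tau>\<in>range F. \<sigma> \<noteq> \<tau> \<longrightarrow>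
      \<sigma> b = b \<and> b = \<tau> b \<and> b \<subseteq> bneg (beq (name_app \<sigma> X) (name_app \<tau> X))"
  proof (intro ballI impI)
    fix \<sigma> \<tau> assume "\<sigma> \<in> range F" "\<tau> \<in> range F" "\<sigma> \<noteq> \<tau>"
    then obtain f g where "\<sigma> = F f" "\<tau> = F g" "f \<noteq> g" by blast
    then show "\<sigma> b = b \<and> b = \<tau> b \<and> b \<subseteq> bneg (beq (name_app \<sigma> X) (name_app \<tau> X))"
      using F(3,4) by simp
  qed
  ultimately show ?thesis using F(2) by (intro exI[of _ "range F"] conjI)
qed

end
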